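(* For every $k\in\mathbb{N}$, the sequence $\{\alpha_k(n)\}_{n=2}^\infty$ defined by $\alpha_k(n)=\dfrac{\ell_k(n)}{\ell_k(n-1)}$ is decreasing and $\lim_{n\to\infty}\dfrac{\ell_k(n)}{\ell_k(n-1)}=1$.
   Context: For $x\ge1$ define $\ell_0(x)=1$, $\ell_1(x)=1+\ln x$, and recursively $\ell_j(x)=1+\ln\ell_{j-1}(x)$ for $j\ge2$. *)

theory Defs
  imports Complex_Main
begin

fun ell :: "nat \<Rightarrow> real \<Rightarrow> real" where
  "ell 0 x = 1"
| "ell (Suc 0) x = 1 + ln x"
| "ell (Suc (Suc j)) x = 1 + ln (ell (Suc j) x)"

definition alpha :: "nat \<Rightarrow> nat \<Rightarrow> real" where
  "alpha k n = ell k (real n) / ell k (real n - 1)"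

end

theory Submission
  imports Defs "HOL-Real_Asymp.Real_Asymp"
begin

text \<open>For \<open>k \<ge> 1\<close> we have \<open>ln \<ell>\<^sub>k = \<ell>\<^sub>k\<^sub>+\<^sub>1 - 1\<close>, so \<open>ln (\<ell>\<^sub>k(y) / \<ell>\<^sub>k(x)) = \<ell>\<^sub>k\<^sub>+\<^sub>1(y) - \<ell>\<^sub>k\<^sub>+\<^sub>1(x)\<close>.
  Every \<open>\<ell>\<^sub>j\<close> with \<open>j \<ge> 1\<close> has derivative \<open>1 / (x \<ell>\<^sub>0(x) \<cdots> \<ell>\<^sub>j\<^sub>-\<^sub>1(x))\<close>, which is
  decreasing on \<open>[1, \<infinity>)\<close>; by the mean value theorem the unit increments of \<open>\<ell>\<^sub>k\<^sub>+\<^sub>1\<close> decrease,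
  hence so does the ratio \<open>\<ell>\<^sub>k(n) / \<ell>\<^sub>k(n-1)\<close>. The same bound on the derivative gives
  \<open>\<ell>\<^sub>k(n) - \<ell>\<^sub>k(n-1) \<le> 1/(n-1)\<close>, so the ratio is squeezed between \<open>1\<close> and \<open>1 + 1/(n-1)\<close>.\<close>

lemma increment_bounds_if_deriv_antitone:
  fixes f f' :: "real \<Rightarrow> real"
  assumes deriv: "\<And>x. a \<le> x \<Longrightarrow> (f has_real_derivative f' x) (at x)"
    and antitone: "\<And>x y. a \<le> x \<Longrightarrow> x \<le> y \<Longrightarrow> f' y \<le> f' x"
    and "a \<le> x" "x \<le> y"
  shows "(y - x) * f' y \<le> f y - f x \<and> f y - f x \<le> (y - x) * f' x"
proof (cases "x = y")
  case False
  with assms(4) have "x < y" by simp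
  then obtain z where z: "x < z" "z < y" "f y - f x = (y - x) * f' z"
    using MVT2[of x y f f'] deriv \<open>a \<le> x\<close> by force
  have "f' y \<le> f' z" "f' z \<le> f' x"
    using antitone z \<open>a \<le> x\<close> by auto
  with z \<open>x < y\<close> show ?thesis by (simp add: mult_left_mono)
qed simp

lemma ell_ge_1: "1 \<le> x \<Longrightarrow> 1 \<le> ell j x"
  by (induction j x rule: ell.induct) auto

lemma ell_pos: "1 \<le> x \<Longrightarrow> 0 < ell j x"
  using ell_ge_1 less_le_trans zero_less_one by blast

lemma ell_mono: "1 \<le> x \<Longrightarrow> x \<le> y \<Longrightarrow> ell j x \<le> ell j y"
proof (induction j x rule: ell.induct)
  case (3 j x)
  then show ?case using ell_pos[of x "Suc j"] by simp
qed auto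

lemma ln_ell: "0 < j \<Longrightarrow> ln (ell j x) = ell (Suc j) x - 1"
  by (cases j) auto

lemma has_real_derivative_ell:
  assumes "1 \<le> x" "0 < j"
  shows "(ell j has_real_derivative 1 / (x * (\<Prod>i<j. ell i x))) (at x)"
  using assms
proof (induction j x rule: ell.induct)
  case (2 x)
  then show ?case
    using DERIV_ln_divide[of x] by (auto intro!: derivative_eq_intros)
next
  case (3 j x)
  have "ell (Suc (Suc j)) = (\<lambda>x. 1 + ln (ell (Suc j) x))"
    by auto
  moreover have "((\<lambda>x. 1 + ln (ell (Suc j) x)) has_real_derivative
      1 / (x * (\<Prod>i<Suc j. ell i x)) / ell (Suc j) x) (at x)"
    using 3 ell_pos[of x "Suc j"] by (auto intro!: derivative_eq_intros)
  ultimately show ?case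
    by (simp add: field_simps)
qed simp

lemma ell_deriv_antitone:
  assumes "1 \<le> x" "x \<le> y"
  shows "1 / (y * (\<Prod>i<j. ell i y)) \<le> 1 / (x * (\<Prod>i<j. ell i x))"
proof -
  have "1 \<le> (\<Prod>i<j. ell i x)"
    using assms ell_ge_1 by (intro prod_ge_1) auto
  moreover have "(\<Prod>i<j. ell i x) \<le> (\<Prod>i<j. ell i y)"
    using assms by (intro prod_mono) (auto intro: ell_mono less_imp_le[OF ell_pos])
  ultimately show ?thesis
    using assms by (intro divide_left_mono mult_mono mult_pos_pos) auto
qed

lemma ell_increment_bounds:
  assumes "0 < j" "1 \<le> x" "x \<le> y"
  shows "(y - x) / (y * (\<Prod>i<j. ell i y)) \<le> ell j y - ell j x
    \<and> ell j y - ell j x \<le> (y - x) / (x * (\<Prod>i<j. ell i x))"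
  using increment_bounds_if_deriv_antitone[of 1 "ell j" "\<lambda>x. 1 / (x * (\<Prod>i<j. ell i x))" x y]
    has_real_derivative_ell ell_deriv_antitone assms
  by simp

lemma ell_increments_antitone:
  assumes "0 < j" "1 \<le> x"
  shows "ell j (x + 2) - ell j (x + 1) \<le> ell j (x + 1) - ell j x"
  using ell_increment_bounds[OF assms(1), of "x + 1" "x + 2"]
    ell_increment_bounds[OF assms, of "x + 1"] assms(2)
  by (simp add: add.commute)

lemma ell_ratio_antitone:
  assumes "1 \<le> x"
  shows "ell k (x + 2) / ell k (x + 1) \<le> ell k (x + 1) / ell k x"
proof (cases "k = 0")
  case False
  have ln_ratio: "ln (ell k z / ell k y) = ell (Suc k) z - ell (Suc k) y"
    if "1 \<le> y" "1 \<le> z" for y z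
    using that False ell_pos[of y k] ell_pos[of z k] by (simp add: ln_div ln_ell)
  have "ln (ell k (x + 2) / ell k (x + 1)) \<le> ln (ell k (x + 1) / ell k x)"
    using assms ell_increments_antitone[of "Suc k" x] by (simp add: ln_ratio)
  then show ?thesis
    using assms by (simp add: ell_pos)
qed simp

lemma ell_ratio_bounds:
  assumes "1 \<le> x"
  shows "1 \<le> ell k (x + 1) / ell k x \<and> ell k (x + 1) / ell k x \<le> 1 + 1 / x"
proof (cases "k = 0")
  case False
  have e: "1 \<le> ell k x" and mono: "ell k x \<le> ell k (x + 1)"
    using assms by (auto intro: ell_ge_1 ell_mono)
  have "ell k (x + 1) - ell k x \<le> 1 / (x * (\<Prod>i<k. ell i x))"
    using ell_increment_bounds[of k x "x + 1"] False assms by simp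
  also have "\<dots> \<le> 1 / x"
    using assms ell_ge_1 by (intro divide_left_mono mult_pos_pos)
      (auto intro: prod_ge_1 prod_pos ell_pos mult_left_le)
  finally have diff: "ell k (x + 1) - ell k x \<le> 1 / x" .
  have "ell k (x + 1) / ell k x = 1 + (ell k (x + 1) - ell k x) / ell k x"
    using e by (simp add: field_simps)
  also have "\<dots> \<le> 1 + (ell k (x + 1) - ell k x)"
    using e mono by (simp add: divide_le_eq mult_le_cancel_left1)
  finally show ?thesis
    using diff mono e by simp
qed (use assms in simp)

theorem lemma2p3:
  fixes k :: nat
  shows "(\<forall>n\<ge>2. alpha k (Suc n) \<le> alpha k n)
         \<and> (\<lambda>n. ell k (real n) / ell k (real n - 1)) \<longlonglongrightarrow> 1"
proof
  show "\<forall>n\<ge>2. alpha k (Suc n) \<le> alpha k n"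
  proof (intro allI impI)
    fix n :: nat
    assume "2 \<le> n"
    then show "alpha k (Suc n) \<le> alpha k n"
      using ell_ratio_antitone[of "real n - 1" k] by (simp add: alpha_def add.commute)
  qed
next
  have "\<forall>\<^sub>F n in sequentially. 1 \<le> ell k (real n) / ell k (real n - 1)
      \<and> ell k (real n) / ell k (real n - 1) \<le> 1 + 1 / (real n - 1)"
    using eventually_ge_at_top[of 2]
  proof eventually_elim
    case (elim n)
    then show ?case
      using ell_ratio_bounds[of "real n - 1" k] by simp
  qed
  then have lower: "\<forall>\<^sub>F n in sequentially. 1 \<le> ell k (real n) / ell k (real n - 1)"
    and upper: "\<forall>\<^sub>F n in sequentially. ell k (real n) / ell k (real n - 1) \<le> 1 + 1 / (real n - 1)"
    unfolding eventually_conj_iff by blast+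
  have "(\<lambda>n. 1 + 1 / (real n - 1)) \<longlonglongrightarrow> (1::real)"
    by real_asymp
  from tendsto_sandwich[OF lower upper tendsto_const this]
  show "(\<lambda>n. ell k (real n) / ell k (real n - 1)) \<longlonglongrightarrow> 1" .
qed

end
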